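(* Let $G$ be a topological group and $U$ a nonempty open subset of $G$. Then the open cover $\mathcal{U}=\{g\cdot U\}_{g\in G}$ of $G$ admits a $\mathcal{U}$-small partition of unity.
   Context: A partition of unity on $X$ indexed by a nonempty set $S$ is a family $\{f_s\}_{s\in S}$ of functions $f_s:X\to[0,1]$ with $\sum_{s\in S}f_s(x)=1$ for all $x$, such that the induced map $f:X\to l_1(S)$, $f(x)(s)=f_s(x)$, is continuous (where $l_1(S)$ carries the norm $\|g\|=\sum_{s}|g(s)|$). It is $\mathcal{U}$-small if for each $s\in S$ the carrier $f_s^{-1}((0,1])$ is contained in some element of $\mathcal{U}$. *)

theory Defs
  imports "HOL-Analysis.Analysis"
begin

text \<open>A partition of unity on the whole space (type 'a) indexed by a nonempty set S:
  functions f s : 'a -> [0,1], summing to 1 pointwise, such that the induced map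
  into l1(S) is continuous, i.e. for every x and e > 0, for all y near x the
  l1-distance sum over s in S of |f s y - f s x| is < e.\<close>
definition partition_of_unity :: "'s set \<Rightarrow> ('s \<Rightarrow> 'a::topological_space \<Rightarrow> real) \<Rightarrow> bool" where
  "partition_of_unity S f \<longleftrightarrow>
     S \<noteq> {} \<and>
     (\<forall>s\<in>S. \<forall>x. 0 \<le> f s x \<and> f s x \<le> 1) \<and>
     (\<forall>x. ((\<lambda>s. f s x) has_sum 1) S) \<and>
     (\<forall>x. \<forall>e>0. \<forall>\<^sub>F y in nhds x. infsum (\<lambda>s. \<bar>f s y - f s x\<bar>) S < e)"

definition small_wrt :: "'a set set \<Rightarrow> 's set \<Rightarrow> ('s \<Rightarrow> 'a \<Rightarrow> real) \<Rightarrow> bool" where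
  "small_wrt \<U> S f \<longleftrightarrow> (\<forall>s\<in>S. \<exists>V\<in>\<U>. {x. 0 < f s x \<and> f s x \<le> 1} \<subseteq> V)"

end

theory Submission
  imports Defs
begin

text \<open>For a neighbourhood W of 0 choose open neighbourhoods V n of 0 with V 0 \<subseteq> W and
  V (n+1) + V (n+1) + V (n+1) \<subseteq> V n. The Birkhoff--Kakutani norm of x, the infimum of 1 and of
  \<Sum> 2^-n_i over all ways of writing x = y_1 + ... + y_k with y_i \<in> V n_i, is symmetric,
  subadditive and small near 0, and norm < 1 forces x \<in> W. Hence d x y = norm (-x + y) is a
  continuous left-invariant pseudometric whose unit ball around s lies in s + W.

  Every pseudometric space has a partition of unity subordinate to its unit balls that is locally
  Lipschitz into l1 (Stone): for each scale n one builds 1-Lipschitz bumps with pairwise disjoint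
  supports inside the unit balls, sums them over n with weights 2^-n, and normalises. Taking
  W = -u0 + U for some u0 \<in> U, every carrier lies in a translate of U.\<close>

lemma sum_le_if_disjoint_supports:
  fixes g :: "'s \<Rightarrow> real"
  assumes "finite F" "\<And>s. 0 \<le> g s" "\<And>s. g s \<le> c"
    and disjoint: "\<And>s t. s \<noteq> t \<Longrightarrow> 0 < g s \<Longrightarrow> g t = 0"
  shows "sum g F \<le> c"
proof (cases "\<exists>s\<in>F. 0 < g s")
  case True
  then obtain s where s: "s \<in> F" "0 < g s" by blast
  have "sum g F = g s + sum g (F - {s})" using assms(1) s(1) by (simp add: sum.remove)
  also have "sum g (F - {s}) = 0" using disjoint[OF _ s(2)] by (intro sum.neutral) (metis DiffE singleton_iff)
  finally show ?thesis using assms(3)[of s] by simp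
next
  case False
  then have "sum g F = 0" using assms(2) by (intro sum.neutral) (metis less_eq_real_def)
  then show ?thesis using assms(2,3)[of undefined] by simp
qed

lemma sum_abs_diff_le_if_disjoint_supports:
  fixes a b :: "'s \<Rightarrow> real"
  assumes "finite F" "\<And>s. 0 \<le> a s" "\<And>s. 0 \<le> b s" "\<And>s. \<bar>a s - b s\<bar> \<le> \<delta>"
    and "\<And>s t. s \<noteq> t \<Longrightarrow> 0 < a s \<Longrightarrow> a t = 0"
    and "\<And>s t. s \<noteq> t \<Longrightarrow> 0 < b s \<Longrightarrow> b t = 0"
  shows "(\<Sum>s\<in>F. \<bar>a s - b s\<bar>) \<le> 2 * \<delta>"
proof -
  define A where "A = {s\<in>F. 0 < a s}"
  define B where "B = {s\<in>F. 0 < b s}"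
  have "card A \<le> Suc 0" unfolding A_def using assms(5)
    by (subst card_le_Suc0_iff_eq) (use assms(1) in \<open>auto, metis less_irrefl\<close>)
  moreover have "card B \<le> Suc 0" unfolding B_def using assms(6)
    by (subst card_le_Suc0_iff_eq) (use assms(1) in \<open>auto, metis less_irrefl\<close>)
  ultimately have card_AB: "card (A \<union> B) \<le> 2" using card_Un_le[of A B] by linarith
  have "(\<Sum>s\<in>F. \<bar>a s - b s\<bar>) = (\<Sum>s\<in>A \<union> B. \<bar>a s - b s\<bar>)"
    using assms(2,3) by (intro sum.mono_neutral_right[OF assms(1)])
      (auto simp: A_def B_def, metis less_eq_real_def)
  also have "\<dots> \<le> card (A \<union> B) * \<delta>"
    using sum_bounded_above[of "A \<union> B" "\<lambda>s. \<bar>a s - b s\<bar>" \<delta>] assms(4) by simp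
  also have "\<dots> \<le> 2 * \<delta>"
    using card_AB assms(4)[of undefined] by (intro mult_right_mono) auto
  finally show ?thesis .
qed

section \<open>Partitions of unity on pseudometric spaces\<close>

locale pseudometric =
  fixes d :: "'a \<Rightarrow> 'a \<Rightarrow> real"
  assumes refl [simp]: "d x x = 0"
    and sym: "d x y = d y x"
    and triangle: "d x y \<le> d x z + d z y"
begin

lemma nonneg [simp]: "0 \<le> d x y"
  using triangle[of x x y] sym[of y x] refl[of x] by linarith

definition dist_to_set :: "'a \<Rightarrow> 'a set \<Rightarrow> real" where
  "dist_to_set x A = Inf ((\<lambda>c. d c x) ` A)"

lemma bdd_below_dists: "bdd_below ((\<lambda>c. d c x) ` A)"
  by (rule bdd_belowI[of _ 0]) auto

lemma dist_to_set_le: "c \<in> A \<Longrightarrow> dist_to_set x A \<le> d c x"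
  unfolding dist_to_set_def by (rule cInf_lower) (auto intro: bdd_below_dists)

lemma dist_to_set_nonneg: "A \<noteq> {} \<Longrightarrow> 0 \<le> dist_to_set x A"
  unfolding dist_to_set_def by (rule cInf_greatest) auto

lemma dist_to_set_less_imp: "A \<noteq> {} \<Longrightarrow> dist_to_set x A < a \<Longrightarrow> \<exists>c\<in>A. d c x < a"
  unfolding dist_to_set_def by (subst (asm) cInf_less_iff) (auto intro: bdd_below_dists)

lemma dist_to_set_lipschitz:
  assumes "A \<noteq> {}"
  shows "dist_to_set y A \<le> dist_to_set x A + d x y"
proof -
  have "dist_to_set y A - d x y \<le> dist_to_set x A"
    unfolding dist_to_set_def[of x]
  proof (rule cInf_greatest)
    fix v assume "v \<in> (\<lambda>c. d c x) ` A"
    then obtain c where "c \<in> A" "v = d c x" by auto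
    then show "dist_to_set y A - d x y \<le> v"
      using dist_to_set_le[of c A y] triangle[of c y x] by linarith
  qed (use assms in simp)
  then show ?thesis by simp
qed

end

text \<open>Cores of
  distinct centres at the same level are 3 radius n apart, so the bumps of width radius n
  around them have disjoint supports.\<close>

locale well_ordered_pseudometric = pseudometric d for d :: "'a \<Rightarrow> 'a \<Rightarrow> real" +
  fixes r :: "'a rel"
  assumes well_order: "well_order_on UNIV r"
begin

abbreviation before :: "'a \<Rightarrow> 'a \<Rightarrow> bool" where
  "before s t \<equiv> (s, t) \<in> r - Id"

lemma before_total: "s \<noteq> t \<Longrightarrow> before s t \<or> before t s"
  using well_order unfolding well_order_on_def linear_order_on_def total_on_def by blast

lemma before_minimal: "x \<in> Q \<Longrightarrow> \<exists>z\<in>Q. \<forall>y. before y z \<longrightarrow> y \<notin> Q"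
  using well_order wf_eq_minimal[of "r - Id"] unfolding well_order_on_def by blast

definition radius :: "nat \<Rightarrow> real" where
  "radius n = (1/2)^n / 4"

lemma radius_pos: "0 < radius n"
  by (simp add: radius_def)

lemma radius_le_one: "radius n \<le> 1"
  using power_le_one[of "1/2::real" n] by (simp add: radius_def)

definition core :: "'a \<Rightarrow> nat \<Rightarrow> 'a set" where
  "core s n = {c. d s c + 3 * radius n \<le> 1 \<and> (\<forall>t. before t s \<longrightarrow> 1 \<le> d t c)}"

definition bump :: "'a \<Rightarrow> nat \<Rightarrow> 'a \<Rightarrow> real" where
  "bump s n x = (if core s n = {} then 0 else max 0 (radius n - dist_to_set x (core s n)))"

lemma bump_nonneg: "0 \<le> bump s n x"
  by (simp add: bump_def)

lemma bump_le_one: "bump s n x \<le> 1"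
  by (cases "core s n = {}")
    (use dist_to_set_nonneg[of "core s n" x] radius_le_one[of n] in \<open>simp_all add: bump_def\<close>)

lemma bump_lipschitz: "\<bar>bump s n y - bump s n x\<bar> \<le> d x y"
proof (cases "core s n = {}")
  case False
  then have "dist_to_set y (core s n) \<le> dist_to_set x (core s n) + d x y"
    "dist_to_set x (core s n) \<le> dist_to_set y (core s n) + d x y"
    using dist_to_set_lipschitz[OF False, of x y] dist_to_set_lipschitz[OF False, of y x] sym[of x y]
    by simp_all
  then show ?thesis using False by (auto simp: bump_def abs_le_iff max_def)
qed (simp add: bump_def)

lemma bump_pos_imp_near_core: "0 < bump s n x \<Longrightarrow> \<exists>c\<in>core s n. d c x < radius n"
  by (rule dist_to_set_less_imp) (auto simp: bump_def split: if_splits)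

lemma bump_pos_imp_dist_less_one:
  assumes "0 < bump s n x"
  shows "d s x < 1"
proof -
  obtain c where "c \<in> core s n" "d c x < radius n"
    using bump_pos_imp_near_core[OF assms] by blast
  then show ?thesis using triangle[of s x c] radius_pos[of n] by (simp add: core_def)
qed

lemma bump_disjoint_supports:
  assumes "s \<noteq> t" "0 < bump s n x"
  shows "bump t n x = 0"
proof (rule ccontr)
  have separated: False
    if "before a b" "c \<in> core a n" "d c x < radius n" "c' \<in> core b n" "d c' x < radius n"
    for a b c c'
    using that triangle[of a c' c] triangle[of c c' x] sym[of x c'] radius_pos[of n]
    by (auto simp: core_def)
  assume "bump t n x \<noteq> 0"
  then have "0 < bump t n x" using bump_nonneg[of t n x] by linarith
  then obtain c' where "c' \<in> core t n" "d c' x < radius n"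
    using bump_pos_imp_near_core by blast
  moreover obtain c where "c \<in> core s n" "d c x < radius n"
    using bump_pos_imp_near_core[OF assms(2)] by blast
  ultimately show False
    using before_total[OF assms(1)] separated by blast
qed

lemma bump_covers: "\<exists>s n. 0 < bump s n x"
proof -
  obtain s where s: "d s x < 1" "\<forall>t. before t s \<longrightarrow> \<not> d t x < 1"
    using before_minimal[of x "{s. d s x < 1}"] by auto
  obtain n where "(1/2::real)^n < (1 - d s x) * (4/3)"
    using real_arch_pow_inv[of "(1 - d s x) * (4/3)" "1/2"] s(1) by auto
  then have x_core: "x \<in> core s n" using s by (auto simp: core_def radius_def not_less)
  then have "dist_to_set x (core s n) \<le> 0" using dist_to_set_le[OF x_core, of x] by simp
  then have "0 < bump s n x" using x_core radius_pos[of n] by (auto simp: bump_def)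
  then show ?thesis by blast
qed

definition weight :: "'a \<Rightarrow> 'a \<Rightarrow> real" where
  "weight s x = (\<Sum>n. (1/2)^n * bump s n x)"

lemma summable_bump_series: "summable (\<lambda>n. (1/2::real)^n * bump s n x)"
  by (rule summable_comparison_test'[OF summable_geometric[of "1/2"]])
    (use bump_nonneg bump_le_one in \<open>auto intro!: mult_left_le\<close>)

lemma summable_bump_diff_series: "summable (\<lambda>n. (1/2::real)^n * \<bar>bump s n y - bump s n x\<bar>)"
proof (rule summable_comparison_test'[OF summable_geometric[of "1/2"]])
  fix n
  have "\<bar>bump s n y - bump s n x\<bar> \<le> 1"
    using bump_nonneg[of s n x] bump_nonneg[of s n y] bump_le_one[of s n x] bump_le_one[of s n y]
    by (auto simp: abs_le_iff)
  then show "norm ((1/2::real)^n * \<bar>bump s n y - bump s n x\<bar>) \<le> (1/2)^n"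
    by (simp add: mult_left_le)
qed simp

lemma weight_nonneg: "0 \<le> weight s x"
  unfolding weight_def by (rule suminf_nonneg[OF summable_bump_series]) (simp add: bump_nonneg)

lemma weight_pos_imp_dist_less_one:
  assumes "0 < weight s x"
  shows "d s x < 1"
proof -
  have "\<exists>n. bump s n x \<noteq> 0"
  proof (rule ccontr)
    assume "\<nexists>n. bump s n x \<noteq> 0"
    then have "weight s x = 0" by (simp add: weight_def)
    with assms show False by simp
  qed
  then show ?thesis using bump_nonneg bump_pos_imp_dist_less_one by (metis less_eq_real_def)
qed

lemma abs_weight_diff_le:
  "\<bar>weight s y - weight s x\<bar> \<le> (\<Sum>n. (1/2)^n * \<bar>bump s n y - bump s n x\<bar>)"
proof -
  have "weight s y - weight s x = (\<Sum>n. (1/2::real)^n * (bump s n y - bump s n x))"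
    unfolding weight_def right_diff_distrib
    by (rule suminf_diff[OF summable_bump_series summable_bump_series])
  also have "\<bar>\<dots>\<bar> \<le> (\<Sum>n. \<bar>(1/2::real)^n * (bump s n y - bump s n x)\<bar>)"
    by (rule summable_rabs) (simp add: abs_mult summable_bump_diff_series)
  finally show ?thesis by (simp add: abs_mult)
qed

lemma sum_weight_le:
  assumes "finite F"
  shows "(\<Sum>s\<in>F. weight s x) \<le> 2"
proof -
  have "(\<Sum>s\<in>F. weight s x) = (\<Sum>n. \<Sum>s\<in>F. (1/2::real)^n * bump s n x)"
    unfolding weight_def by (rule suminf_sum[symmetric]) (rule summable_bump_series)
  also have "\<dots> \<le> (\<Sum>n. (1/2::real)^n)"
  proof (rule suminf_le)
    fix n
    have "(\<Sum>s\<in>F. bump s n x) \<le> 1"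
      by (rule sum_le_if_disjoint_supports[OF assms])
        (auto intro: bump_nonneg bump_le_one bump_disjoint_supports)
    then show "(\<Sum>s\<in>F. (1/2::real)^n * bump s n x) \<le> (1/2)^n"
      by (simp add: sum_distrib_left[symmetric] mult_left_le)
  qed (auto intro: summable_sum summable_bump_series)
  also have "\<dots> = 2" by (simp add: suminf_geometric)
  finally show ?thesis .
qed

lemma sum_abs_weight_diff_le:
  assumes "finite F"
  shows "(\<Sum>s\<in>F. \<bar>weight s y - weight s x\<bar>) \<le> 4 * d x y"
proof -
  have "(\<Sum>s\<in>F. \<bar>weight s y - weight s x\<bar>)
      \<le> (\<Sum>s\<in>F. \<Sum>n. (1/2::real)^n * \<bar>bump s n y - bump s n x\<bar>)"
    by (rule sum_mono) (rule abs_weight_diff_le)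
  also have "\<dots> = (\<Sum>n. \<Sum>s\<in>F. (1/2::real)^n * \<bar>bump s n y - bump s n x\<bar>)"
    by (rule suminf_sum[symmetric]) (rule summable_bump_diff_series)
  also have "\<dots> \<le> (\<Sum>n. (1/2::real)^n * (2 * d x y))"
  proof (rule suminf_le)
    fix n
    have "(\<Sum>s\<in>F. \<bar>bump s n y - bump s n x\<bar>) \<le> 2 * d x y"
      by (rule sum_abs_diff_le_if_disjoint_supports[OF assms])
        (auto intro: bump_nonneg bump_lipschitz bump_disjoint_supports)
    then show "(\<Sum>s\<in>F. (1/2::real)^n * \<bar>bump s n y - bump s n x\<bar>) \<le> (1/2)^n * (2 * d x y)"
      by (simp add: sum_distrib_left[symmetric])
  qed (auto intro: summable_sum summable_bump_diff_series summable_mult2 summable_geometric)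
  also have "\<dots> = 4 * d x y"
    using suminf_mult2[OF summable_geometric[of "1/2::real"], of "2 * d x y"]
    by (simp add: suminf_geometric)
  finally show ?thesis .
qed

definition total_weight :: "'a \<Rightarrow> real" where
  "total_weight x = infsum (\<lambda>s. weight s x) UNIV"

lemma weight_summable_on: "(\<lambda>s. weight s x) summable_on UNIV"
  by (rule nonneg_bdd_above_summable_on)
    (auto intro!: bdd_aboveI2[where M=2] sum_weight_le weight_nonneg)

lemma sum_weight_le_total_weight: "finite F \<Longrightarrow> (\<Sum>s\<in>F. weight s x) \<le> total_weight x"
  unfolding total_weight_def
  by (rule finite_sum_le_infsum[OF weight_summable_on]) (auto intro: weight_nonneg)

lemma total_weight_pos: "0 < total_weight x"
proof -
  obtain s n where "0 < bump s n x" using bump_covers by blast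
  then have "0 < weight s x" unfolding weight_def
    by (intro suminf_pos2[OF summable_bump_series, of _ _ n]) (simp_all add: bump_nonneg)
  also have "weight s x \<le> total_weight x" using sum_weight_le_total_weight[of "{s}" x] by simp
  finally show ?thesis .
qed

lemma total_weight_lipschitz: "\<bar>total_weight x - total_weight y\<bar> \<le> 4 * d x y"
proof -
  have "total_weight y \<le> total_weight x + 4 * d x y" for x y
    unfolding total_weight_def[of y]
  proof (rule infsum_le_finite_sums[OF weight_summable_on])
    fix F :: "'a set" assume F: "finite F"
    have "(\<Sum>s\<in>F. weight s y) \<le> (\<Sum>s\<in>F. weight s x + \<bar>weight s y - weight s x\<bar>)"
      by (rule sum_mono) linarith
    also have "\<dots> \<le> total_weight x + 4 * d x y"
      using sum_weight_le_total_weight[OF F, of x] sum_abs_weight_diff_le[OF F, of y x]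
      by (simp add: sum.distrib)
    finally show "(\<Sum>s\<in>F. weight s y) \<le> total_weight x + 4 * d x y" .
  qed
  then show ?thesis using sym[of x y] by (smt (verit))
qed

definition normalized_weight :: "'a \<Rightarrow> 'a \<Rightarrow> real" where
  "normalized_weight s x = weight s x / total_weight x"

lemma normalized_weight_nonneg: "0 \<le> normalized_weight s x"
  using weight_nonneg[of s x] total_weight_pos[of x] by (simp add: normalized_weight_def)

lemma normalized_weight_le_one: "normalized_weight s x \<le> 1"
  using sum_weight_le_total_weight[of "{s}" x] total_weight_pos[of x]
  by (simp add: normalized_weight_def)

lemma normalized_weight_has_sum: "((\<lambda>s. normalized_weight s x) has_sum 1) UNIV"
proof -
  have "((\<lambda>s. weight s x) has_sum total_weight x) UNIV"
    unfolding total_weight_def by (rule has_sum_infsum[OF weight_summable_on])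
  from has_sum_cmult_right[OF this, of "inverse (total_weight x)"] show ?thesis
    using total_weight_pos[of x] by (simp add: normalized_weight_def field_simps)
qed

lemma normalized_weight_pos_imp_dist_less_one: "0 < normalized_weight s x \<Longrightarrow> d s x < 1"
  using total_weight_pos[of x]
  by (intro weight_pos_imp_dist_less_one) (simp add: normalized_weight_def zero_less_divide_iff)

lemma sum_abs_normalized_weight_diff_le:
  assumes "finite F"
  shows "(\<Sum>s\<in>F. \<bar>normalized_weight s y - normalized_weight s x\<bar>) \<le> 8 * d x y / total_weight y"
proof -
  define H where "H = total_weight"
  have Hx: "0 < H x" and Hy: "0 < H y" by (simp_all add: H_def total_weight_pos)
  have "\<bar>normalized_weight s y - normalized_weight s x\<bar>
      \<le> \<bar>weight s y - weight s x\<bar> / H y + weight s x * (\<bar>H x - H y\<bar> / (H x * H y))" for s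
  proof -
    have "normalized_weight s y - normalized_weight s x
        = (weight s y - weight s x) / H y + weight s x * ((H x - H y) / (H x * H y))"
      using Hx Hy by (simp add: normalized_weight_def H_def field_simps)
    then have "\<bar>normalized_weight s y - normalized_weight s x\<bar>
        \<le> \<bar>(weight s y - weight s x) / H y\<bar> + \<bar>weight s x * ((H x - H y) / (H x * H y))\<bar>"
      by (metis abs_triangle_ineq)
    also have "\<dots> = \<bar>weight s y - weight s x\<bar> / H y + weight s x * (\<bar>H x - H y\<bar> / (H x * H y))"
      using Hx Hy weight_nonneg[of s x] by (simp add: abs_mult)
    finally show ?thesis .
  qed
  then have "(\<Sum>s\<in>F. \<bar>normalized_weight s y - normalized_weight s x\<bar>)
      \<le> (\<Sum>s\<in>F. \<bar>weight s y - weight s x\<bar> / H y + weight s x * (\<bar>H x - H y\<bar> / (H x * H y)))"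
    by (rule sum_mono)
  also have "\<dots> = (\<Sum>s\<in>F. \<bar>weight s y - weight s x\<bar>) / H y
         + (\<Sum>s\<in>F. weight s x) * (\<bar>H x - H y\<bar> / (H x * H y))"
    by (simp add: sum.distrib sum_divide_distrib sum_distrib_right)
  also have "\<dots> \<le> 4 * d x y / H y + H x * (4 * d x y / (H x * H y))"
  proof (rule add_mono)
    show "(\<Sum>s\<in>F. \<bar>weight s y - weight s x\<bar>) / H y \<le> 4 * d x y / H y"
      using sum_abs_weight_diff_le[OF assms, of y x] Hy by (simp add: divide_right_mono)
    show "(\<Sum>s\<in>F. weight s x) * (\<bar>H x - H y\<bar> / (H x * H y)) \<le> H x * (4 * d x y / (H x * H y))"
      using sum_weight_le_total_weight[OF assms, of x] total_weight_lipschitz[of x y] Hx Hy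
      by (intro mult_mono divide_right_mono) (auto simp: H_def intro: sum_nonneg weight_nonneg)
  qed
  also have "\<dots> = 8 * d x y / H y" using Hx by (simp add: field_simps)
  finally show ?thesis by (simp add: H_def)
qed

lemma infsum_abs_normalized_weight_diff_le:
  assumes "d x y \<le> total_weight x / 8"
  shows "infsum (\<lambda>s. \<bar>normalized_weight s y - normalized_weight s x\<bar>) UNIV
    \<le> 16 * d x y / total_weight x"
proof -
  have Hx: "0 < total_weight x" and Hy: "0 < total_weight y" by (rule total_weight_pos)+
  have summable: "(\<lambda>s. \<bar>normalized_weight s y - normalized_weight s x\<bar>) summable_on UNIV"
    by (rule nonneg_bdd_above_summable_on)
      (auto intro!: bdd_aboveI2[where M="8 * d x y / total_weight y"] sum_abs_normalized_weight_diff_le)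
  have "infsum (\<lambda>s. \<bar>normalized_weight s y - normalized_weight s x\<bar>) UNIV \<le> 8 * d x y / total_weight y"
    by (rule infsum_le_finite_sums[OF summable]) (rule sum_abs_normalized_weight_diff_le)
  also have "\<dots> \<le> 16 * d x y / total_weight x"
  proof -
    have "total_weight x \<le> 2 * total_weight y"
      using total_weight_lipschitz[of x y] assms by linarith
    then have "16 * d x y / (2 * total_weight y) \<le> 16 * d x y / total_weight x"
      using Hx by (intro frac_le) simp_all
    then show ?thesis by simp
  qed
  finally show ?thesis .
qed

end

lemma partition_of_unity_subordinate_to_unit_balls:
  fixes d :: "'a::topological_space \<Rightarrow> 'a \<Rightarrow> real"
  assumes "pseudometric d"
    and balls_nhds: "\<And>x e. 0 < e \<Longrightarrow> \<forall>\<^sub>F y in nhds x. d x y < e"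
  shows "\<exists>f. partition_of_unity (UNIV :: 'a set) f \<and> (\<forall>s x. 0 < f s x \<longrightarrow> d s x < 1)"
proof -
  interpret pseudometric d by (fact assms(1))
  obtain r :: "'a rel" where "Well_order r" "Field r = UNIV"
    using well_ordering[where 'a='a] by (elim exE conjE)
  then interpret well_ordered_pseudometric d r
    by unfold_locales simp
  have "\<forall>\<^sub>F y in nhds x. infsum (\<lambda>s. \<bar>normalized_weight s y - normalized_weight s x\<bar>) UNIV < e"
    if e: "0 < e" for x e
  proof -
    define \<delta> where "\<delta> = min (total_weight x / 8) (e * total_weight x / 16)"
    have Hx: "0 < total_weight x" by (rule total_weight_pos)
    then have "0 < \<delta>" using e by (simp add: \<delta>_def)
    have "\<forall>\<^sub>F y in nhds x. d x y < \<delta>" by (rule balls_nhds) fact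
    then show ?thesis
    proof (rule eventually_mono)
      fix y assume y: "d x y < \<delta>"
      then have "infsum (\<lambda>s. \<bar>normalized_weight s y - normalized_weight s x\<bar>) UNIV
          \<le> 16 * d x y / total_weight x"
        by (intro infsum_abs_normalized_weight_diff_le) (simp add: \<delta>_def)
      also have "16 * d x y / total_weight x < e"
        using y Hx by (simp add: \<delta>_def pos_divide_less_eq)
      finally show "infsum (\<lambda>s. \<bar>normalized_weight s y - normalized_weight s x\<bar>) UNIV < e" .
    qed
  qed
  then have "partition_of_unity UNIV normalized_weight"
    unfolding partition_of_unity_def
    using normalized_weight_nonneg normalized_weight_le_one normalized_weight_has_sum by blast
  then show ?thesis using normalized_weight_pos_imp_dist_less_one by blast
qed

section \<open>The Birkhoff--Kakutani norm\<close>

lemma split_list_at_weight: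
  fixes w :: "'b \<Rightarrow> real"
  assumes "0 \<le> c" "c < (\<Sum>z\<leftarrow>ys. w z)"
  shows "\<exists>as z cs. ys = as @ z # cs \<and> (\<Sum>z\<leftarrow>as. w z) \<le> c \<and> c < (\<Sum>z\<leftarrow>as. w z) + w z"
  using assms
proof (induction ys arbitrary: c)
  case (Cons z zs)
  show ?case
  proof (cases "c < w z")
    case True
    then show ?thesis using Cons.prems(1) by (intro exI[of _ "[]"]) auto
  next
    case False
    with Cons.prems obtain as z' cs where
      "zs = as @ z' # cs" "(\<Sum>z\<leftarrow>as. w z) \<le> c - w z" "c - w z < (\<Sum>z\<leftarrow>as. w z) + w z'"
      using Cons.IH[of "c - w z"] by auto
    then show ?thesis by (intro exI[of _ "z # as"] exI[of _ z'] exI[of _ cs]) auto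
  qed
qed simp

definition chain_weight :: "(nat \<times> 'a) list \<Rightarrow> real" where
  "chain_weight ys = (\<Sum>p\<leftarrow>ys. (1/2)^fst p)"

definition chain_sum :: "(nat \<times> 'a::monoid_add) list \<Rightarrow> 'a" where
  "chain_sum ys = (\<Sum>p\<leftarrow>ys. snd p)"

lemma chain_weight_simps [simp]:
  "chain_weight [] = 0" "chain_weight (p # ys) = (1/2)^fst p + chain_weight ys"
  "chain_weight (xs @ ys) = chain_weight xs + chain_weight ys"
  by (simp_all add: chain_weight_def)

lemma chain_sum_simps [simp]:
  "chain_sum [] = 0" "chain_sum (p # ys) = snd p + chain_sum ys"
  "chain_sum (xs @ ys) = chain_sum xs + chain_sum ys"
  by (simp_all add: chain_sum_def)

lemma chain_sum_rev_uminus [simp]: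
  fixes ys :: "(nat \<times> 'a::group_add) list"
  shows "chain_sum (rev (map (\<lambda>(n, y). (n, - y)) ys)) = - chain_sum ys"
  by (induction ys) (auto simp: minus_add)

lemma chain_weight_rev_uminus [simp]:
  "chain_weight (rev (map (\<lambda>(n, y). (n, - y)) ys)) = chain_weight ys"
  by (induction ys) auto

lemma chain_weight_nonneg: "0 \<le> chain_weight ys"
  by (induction ys) auto

lemma chain_weight_pos: "ys \<noteq> [] \<Longrightarrow> 0 < chain_weight ys"
  by (cases ys) (auto intro: add_pos_nonneg chain_weight_nonneg)

locale kakutani_sequence =
  fixes V :: "nat \<Rightarrow> 'a::group_add set"
  assumes zero_mem: "0 \<in> V n"
    and uminus_mem: "x \<in> V n \<Longrightarrow> -x \<in> V n"
    and add3_mem: "a \<in> V (Suc n) \<Longrightarrow> b \<in> V (Suc n) \<Longrightarrow> c \<in> V (Suc n) \<Longrightarrow> a + b + c \<in> V n"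
begin

lemma antimono: "m \<le> n \<Longrightarrow> V n \<subseteq> V m"
proof (rule lift_Suc_antimono_le[of V])
  show "V (Suc k) \<subseteq> V k" for k
    using add3_mem[OF _ zero_mem zero_mem, of _ k] by auto
qed

text \<open>Split the chain where its weight passes half: both outer parts are lighter than
  2^-(m+1), and the middle term has weight below 2^-m, so lies in V (m+1).\<close>

lemma chain_sum_mem:
  "set ys \<subseteq> Sigma UNIV V \<Longrightarrow> chain_weight ys < (1/2)^m \<Longrightarrow> chain_sum ys \<in> V m"
proof (induction "length ys" arbitrary: ys m rule: less_induct)
  case less
  show ?case
  proof (cases "ys = []")
    case True
    then show ?thesis by (simp add: zero_mem)
  next
    case False
    define T where "T = chain_weight ys"
    have T_pos: "0 < T" using False by (simp add: T_def chain_weight_pos)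
    have T_less: "T < (1/2)^m" using less.prems(2) by (simp add: T_def)
    obtain as z cs where ys: "ys = as @ z # cs"
      and as: "chain_weight as \<le> T/2" and z: "T/2 < chain_weight as + (1/2)^fst z"
      using split_list_at_weight[of "T/2" "\<lambda>p. (1/2::real)^fst p" ys] T_pos
      by (auto simp: T_def chain_weight_def)
    have T_split: "T = chain_weight as + (1/2)^fst z + chain_weight cs"
      by (simp add: T_def ys)
    have "chain_sum as \<in> V (Suc m)"
      using less.prems(1) as T_less by (intro less.hyps) (auto simp: ys)
    moreover have "chain_sum cs \<in> V (Suc m)"
      using less.prems(1) z T_split T_less by (intro less.hyps) (auto simp: ys)
    moreover have "snd z \<in> V (Suc m)"
    proof -
      have "(1/2::real)^fst z < (1/2)^m"
        using T_split T_less chain_weight_nonneg[of as] chain_weight_nonneg[of cs] by linarith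
      then have "Suc m \<le> fst z" by (simp add: power_strict_decreasing_iff)
      moreover have "snd z \<in> V (fst z)" using less.prems(1) by (auto simp: ys)
      ultimately show ?thesis using antimono by blast
    qed
    ultimately show ?thesis using add3_mem by (simp add: ys add.assoc)
  qed
qed

definition chain_weights :: "'a \<Rightarrow> real set" where
  "chain_weights x = {chain_weight ys | ys. set ys \<subseteq> Sigma UNIV V \<and> chain_sum ys = x}"

definition kakutani_norm :: "'a \<Rightarrow> real" where
  "kakutani_norm x = Inf (insert 1 (chain_weights x))"

lemma chain_weights_nonneg: "a \<in> chain_weights x \<Longrightarrow> 0 \<le> a"
  by (auto simp: chain_weights_def chain_weight_nonneg)

lemma bdd_below_chain_weights: "bdd_below (insert 1 (chain_weights x))"
  by (rule bdd_belowI[of _ 0]) (auto dest: chain_weights_nonneg)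

lemma kakutani_norm_nonneg: "0 \<le> kakutani_norm x"
  unfolding kakutani_norm_def by (rule cInf_greatest) (auto dest: chain_weights_nonneg)

lemma kakutani_norm_le_one: "kakutani_norm x \<le> 1"
  unfolding kakutani_norm_def by (rule cInf_lower[OF _ bdd_below_chain_weights]) simp

lemma kakutani_norm_le_chain_weight:
  "set ys \<subseteq> Sigma UNIV V \<Longrightarrow> kakutani_norm (chain_sum ys) \<le> chain_weight ys"
  unfolding kakutani_norm_def
  by (rule cInf_lower[OF _ bdd_below_chain_weights]) (auto simp: chain_weights_def)

lemma kakutani_norm_zero [simp]: "kakutani_norm 0 = 0"
  using kakutani_norm_le_chain_weight[of "[]"] kakutani_norm_nonneg[of 0] by simp

lemma kakutani_norm_le_if_mem: "x \<in> V n \<Longrightarrow> kakutani_norm x \<le> (1/2)^n"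
  using kakutani_norm_le_chain_weight[of "[(n, x)]"] by simp

lemma mem_if_kakutani_norm_less_one:
  assumes "kakutani_norm x < 1"
  shows "x \<in> V 0"
proof -
  obtain a where "a \<in> insert 1 (chain_weights x)" "a < 1"
    using assms unfolding kakutani_norm_def
    by (subst (asm) cInf_less_iff[OF _ bdd_below_chain_weights]) auto
  then obtain ys where "set ys \<subseteq> Sigma UNIV V" "chain_sum ys = x" "chain_weight ys < (1/2)^0"
    by (auto simp: chain_weights_def)
  then show ?thesis using chain_sum_mem by blast
qed

lemma chain_weights_uminus: "chain_weights (- x) = chain_weights x"
proof -
  have "chain_weights x \<subseteq> chain_weights (- x)" for x
  proof
    fix a assume "a \<in> chain_weights x"
    then obtain ys where ys: "set ys \<subseteq> Sigma UNIV V" "chain_sum ys = x" "a = chain_weight ys"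
      by (auto simp: chain_weights_def)
    define zs where "zs = rev (map (\<lambda>(n, y). (n, - y)) ys)"
    have "set zs \<subseteq> Sigma UNIV V" using ys(1) uminus_mem by (auto simp: zs_def)
    moreover have "chain_sum zs = - x" "chain_weight zs = a"
      using ys(2,3) by (simp_all add: zs_def)
    ultimately show "a \<in> chain_weights (- x)" unfolding chain_weights_def by blast
  qed
  from this[of x] this[of "- x"] show ?thesis by simp
qed

lemma kakutani_norm_uminus [simp]: "kakutani_norm (- x) = kakutani_norm x"
  by (simp add: kakutani_norm_def chain_weights_uminus)

lemma kakutani_norm_le_add:
  assumes "a \<in> insert 1 (chain_weights x)" "b \<in> insert 1 (chain_weights y)"
  shows "kakutani_norm (x + y) \<le> a + b"
proof (cases "a = 1 \<or> b = 1")
  case True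
  moreover have "0 \<le> a" "0 \<le> b" using assms by (auto dest: chain_weights_nonneg)
  ultimately show ?thesis using kakutani_norm_le_one[of "x + y"] by auto
next
  case False
  then obtain ys zs where "set ys \<subseteq> Sigma UNIV V" "chain_sum ys = x" "a = chain_weight ys"
    "set zs \<subseteq> Sigma UNIV V" "chain_sum zs = y" "b = chain_weight zs"
    using assms by (auto simp: chain_weights_def)
  then show ?thesis using kakutani_norm_le_chain_weight[of "ys @ zs"] by simp
qed

lemma kakutani_norm_add: "kakutani_norm (x + y) \<le> kakutani_norm x + kakutani_norm y"
proof -
  have "kakutani_norm (x + y) - kakutani_norm y \<le> kakutani_norm x"
    unfolding kakutani_norm_def[of x]
  proof (rule cInf_greatest)
    fix a assume a: "a \<in> insert 1 (chain_weights x)"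
    have "kakutani_norm (x + y) - a \<le> kakutani_norm y"
      unfolding kakutani_norm_def[of y]
    proof (rule cInf_greatest)
      fix b assume b: "b \<in> insert 1 (chain_weights y)"
      show "kakutani_norm (x + y) - a \<le> b" using kakutani_norm_le_add[OF a b] by linarith
    qed simp
    then show "kakutani_norm (x + y) - kakutani_norm y \<le> a" by linarith
  qed simp
  then show ?thesis by linarith
qed

end

section \<open>Topological groups\<close>

lemma nhds_zero_add_split:
  fixes N :: "'a::topological_group_add set"
  assumes "open N" "0 \<in> N"
  obtains A where "open A" "0 \<in> A" "\<And>a b. a \<in> A \<Longrightarrow> b \<in> A \<Longrightarrow> a + b \<in> N"
proof -
  have "((\<lambda>p. fst p + snd p) \<longlongrightarrow> (0::'a) + 0) (nhds 0 \<times>\<^sub>F nhds 0)"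
    by (intro tendsto_add filterlim_fst filterlim_snd)
  then have "\<forall>\<^sub>F p in nhds 0 \<times>\<^sub>F nhds 0. fst p + snd p \<in> N"
    using assms by (intro topological_tendstoD) auto
  then obtain Q where Q: "eventually Q (nhds (0::'a))" "\<And>a b. Q a \<Longrightarrow> Q b \<Longrightarrow> a + b \<in> N"
    unfolding eventually_prod_same by auto
  from Q(1) obtain A where A: "open A" "0 \<in> A" "\<And>a. a \<in> A \<Longrightarrow> Q a"
    unfolding eventually_nhds by auto
  show ?thesis by (rule that[OF A(1,2)]) (simp add: A(3) Q(2))
qed

lemma nhds_zero_add3_split:
  fixes N :: "'a::topological_group_add set"
  assumes "open N" "0 \<in> N"
  obtains M where "open M" "0 \<in> M" "\<And>x. x \<in> M \<Longrightarrow> - x \<in> M"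
    "\<And>a b c. a \<in> M \<Longrightarrow> b \<in> M \<Longrightarrow> c \<in> M \<Longrightarrow> a + b + c \<in> N"
proof -
  obtain A where A: "open A" "0 \<in> A" "\<And>a b. a \<in> A \<Longrightarrow> b \<in> A \<Longrightarrow> a + b \<in> N"
    using nhds_zero_add_split[OF assms] by metis
  obtain B where B: "open B" "0 \<in> B" "\<And>a b. a \<in> B \<Longrightarrow> b \<in> B \<Longrightarrow> a + b \<in> A"
    using nhds_zero_add_split[OF A(1,2)] by metis
  define M where "M = (A \<inter> B) \<inter> uminus -` (A \<inter> B)"
  have "open M"
    unfolding M_def by (intro open_Int open_vimage A(1) B(1) continuous_intros)
  moreover have "0 \<in> M" using A(2) B(2) by (simp add: M_def)
  moreover have "- x \<in> M" if "x \<in> M" for x using that by (simp add: M_def)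
  moreover have "a + b + c \<in> N" if "a \<in> M" "b \<in> M" "c \<in> M" for a b c
    using that A(3) B(3) by (simp add: M_def)
  ultimately show ?thesis by (rule that)
qed

lemma exists_kakutani_sequence:
  fixes W :: "'a::topological_group_add set"
  assumes "open W" "0 \<in> W"
  obtains V where "kakutani_sequence V" "\<And>n. open (V n)" "V 0 \<subseteq> W"
proof -
  define P where "P M \<longleftrightarrow> open M \<and> 0 \<in> M \<and> (\<forall>x\<in>M. - x \<in> M) \<and> M \<subseteq> W" for M :: "'a set"
  define Q where "Q M M' \<longleftrightarrow> (\<forall>a\<in>M'. \<forall>b\<in>M'. \<forall>c\<in>M'. a + b + c \<in> M)" for M M' :: "'a set"
  have step: "\<exists>M'. P M' \<and> Q M M'" if M: "open M" "0 \<in> M" "M \<subseteq> W" for M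
  proof -
    obtain M' where M': "open M'" "0 \<in> M'" "\<And>x. x \<in> M' \<Longrightarrow> - x \<in> M'"
      "\<And>a b c. a \<in> M' \<Longrightarrow> b \<in> M' \<Longrightarrow> c \<in> M' \<Longrightarrow> a + b + c \<in> M"
      using nhds_zero_add3_split[OF M(1,2)] by metis
    have "M' \<subseteq> M" using M'(2,4) by (metis add.right_neutral subsetI)
    then have "P M'" unfolding P_def using M'(1-3) M(3) by auto
    moreover have "Q M M'" unfolding Q_def using M'(4) by simp
    ultimately show ?thesis by auto
  qed
  have "\<exists>V. \<forall>n. P (V n) \<and> Q (V n) (V (Suc n))"
  proof (rule dependent_nat_choice)
    show "\<exists>M. P M" using step[OF assms] by auto
    show "\<exists>M'. P M' \<and> Q M M'" if "P M" for M n using step that by (simp add: P_def)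
  qed
  then obtain V where V: "\<And>n. P (V n)" "\<And>n. Q (V n) (V (Suc n))" by auto
  show ?thesis
  proof (rule that)
    show "kakutani_sequence V" using V by unfold_locales (auto simp: P_def Q_def)
    show "open (V n)" for n using V(1) by (simp add: P_def)
    show "V 0 \<subseteq> W" using V(1) by (simp add: P_def)
  qed
qed

lemma (in kakutani_sequence) pseudometric_kakutani_dist:
  "pseudometric (\<lambda>x y. kakutani_norm (- x + y))"
proof
  show "kakutani_norm (- x + x) = 0" for x by simp
  show "kakutani_norm (- x + y) = kakutani_norm (- y + x)" for x y
    using kakutani_norm_uminus[of "- x + y"] by (simp add: minus_add)
  show "kakutani_norm (- x + y) \<le> kakutani_norm (- x + z) + kakutani_norm (- z + y)" for x y z
    using kakutani_norm_add[of "- x + z" "- z + y"] by (simp add: add.assoc)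
qed

lemma eventually_kakutani_norm_less:
  fixes V :: "nat \<Rightarrow> 'a::topological_group_add set"
  assumes "kakutani_sequence V" "\<And>n. open (V n)" "0 < e"
  shows "\<forall>\<^sub>F y in nhds x. kakutani_sequence.kakutani_norm V (- x + y) < e"
proof -
  interpret kakutani_sequence V by (fact assms(1))
  obtain n where n: "(1/2::real)^n < e"
    using real_arch_pow_inv[of e "1/2"] assms(3) by auto
  have "((\<lambda>y. - x + y) \<longlongrightarrow> - x + x) (nhds x)"
    by (intro tendsto_add tendsto_const filterlim_ident)
  then have "\<forall>\<^sub>F y in nhds x. - x + y \<in> V n"
    using assms(2)[of n] zero_mem[of n] by (intro topological_tendstoD) auto
  then show ?thesis
  proof (rule eventually_mono)
    fix y assume "- x + y \<in> V n"
    then show "kakutani_norm (- x + y) < e"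
      using kakutani_norm_le_if_mem n by (meson le_less_trans)
  qed
qed

lemma topological_group_partition_of_unity:
  fixes W :: "'a::topological_group_add set"
  assumes "open W" "0 \<in> W"
  shows "\<exists>f. partition_of_unity (UNIV :: 'a set) f \<and> (\<forall>s x. 0 < f s x \<longrightarrow> - s + x \<in> W)"
proof -
  obtain V where V: "kakutani_sequence V" "\<And>n. open (V n)" "V 0 \<subseteq> W"
    using exists_kakutani_sequence[OF assms] by metis
  interpret kakutani_sequence V by (fact V(1))
  obtain f where f: "partition_of_unity (UNIV :: 'a set) f"
    and small: "\<forall>s x. 0 < f s x \<longrightarrow> kakutani_norm (- s + x) < 1"
    using partition_of_unity_subordinate_to_unit_balls[OF pseudometric_kakutani_dist
        eventually_kakutani_norm_less[OF V(1,2)]] by auto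
  show ?thesis
  proof (intro exI[of _ f] conjI allI impI f)
    fix s x assume "0 < f s x"
    then have "kakutani_norm (- s + x) < 1" using small by simp
    then have "- s + x \<in> V 0" by (rule mem_if_kakutani_norm_less_one)
    then show "- s + x \<in> W" using V(3) by auto
  qed
qed

lemma partition_of_unity_reindex:
  assumes pou: "partition_of_unity S f" and inverse: "\<And>s. s \<in> S \<Longrightarrow> g (h s) = s"
  shows "partition_of_unity (h ` S) (\<lambda>t. f (g t))"
proof -
  have inj: "inj_on h S" using inverse by (rule inj_on_inverseI)
  have sum_eq: "((\<lambda>t. f (g t) x) has_sum 1) (h ` S) \<longleftrightarrow> ((\<lambda>s. f s x) has_sum 1) S" for x
    unfolding has_sum_reindex[OF inj] o_def by (rule has_sum_cong) (simp add: inverse)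
  have infsum_eq: "infsum (\<lambda>t. \<bar>f (g t) y - f (g t) x\<bar>) (h ` S) = infsum (\<lambda>s. \<bar>f s y - f s x\<bar>) S"
    for x y
    unfolding infsum_reindex[OF inj] o_def by (rule infsum_cong) (simp add: inverse)
  show ?thesis
    using pou inverse unfolding partition_of_unity_def sum_eq infsum_eq by auto
qed

lemma small_wrt_reindex:
  assumes "small_wrt \<U> S f" "\<And>s. s \<in> S \<Longrightarrow> g (h s) = s"
  shows "small_wrt \<U> (h ` S) (\<lambda>t. f (g t))"
  using assms by (auto simp: small_wrt_def)

theorem mainTheorem4:
  fixes U :: "'a::topological_group_add set"
  assumes "open U" and "U \<noteq> {}"
  shows "\<exists>(S::'a set set) f. partition_of_unity S f \<and>
           small_wrt (range (\<lambda>g. (\<lambda>u. g + u) ` U)) S f"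
proof -
  obtain u0 where u0: "u0 \<in> U" using assms(2) by blast
  define W where "W = (\<lambda>w. u0 + w) -` U"
  have "open W"
    unfolding W_def by (intro open_vimage assms(1) continuous_intros)
  moreover have "0 \<in> W" using u0 by (simp add: W_def)
  ultimately have "\<exists>f. partition_of_unity (UNIV :: 'a set) f \<and> (\<forall>s x. 0 < f s x \<longrightarrow> - s + x \<in> W)"
    by (rule topological_group_partition_of_unity)
  then obtain f where f: "partition_of_unity (UNIV :: 'a set) f"
    and small: "\<forall>s x. 0 < f s x \<longrightarrow> - s + x \<in> W"
    by (elim exE conjE)
  have "small_wrt (range (\<lambda>g. (\<lambda>u. g + u) ` U)) UNIV f"
    unfolding small_wrt_def
  proof
    fix s :: 'a
    have "{x. 0 < f s x \<and> f s x \<le> 1} \<subseteq> (\<lambda>u. (s - u0) + u) ` U"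
    proof
      fix x assume "x \<in> {x. 0 < f s x \<and> f s x \<le> 1}"
      then have "u0 + (- s + x) \<in> U" using small by (simp add: W_def)
      moreover have "x = (s - u0) + (u0 + (- s + x))" by (simp only: add.assoc[symmetric] diff_add_cancel) simp
      ultimately show "x \<in> (\<lambda>u. (s - u0) + u) ` U" by (rule rev_image_eqI)
    qed
    then show "\<exists>V\<in>range (\<lambda>g. (\<lambda>u. g + u) ` U). {x. 0 < f s x \<and> f s x \<le> 1} \<subseteq> V"
      by (intro bexI[of _ "(\<lambda>u. (s - u0) + u) ` U"]) auto
  qed
  then have "small_wrt (range (\<lambda>g. (\<lambda>u. g + u) ` U)) (range (\<lambda>s. {s})) (\<lambda>A. f (the_elem A))"
    by (rule small_wrt_reindex) simp
  moreover have "partition_of_unity (range (\<lambda>s. {s})) (\<lambda>A. f (the_elem A))"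
    using f by (rule partition_of_unity_reindex) simp
  ultimately show ?thesis by (intro exI conjI)
qed

end
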